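(* Fix any values of the utility parameters ($\beta$, $\alpha$, $\pi$) and of the discount factor $\delta\in(0,1)$. If the adversary is not restricted by timely punishments, then no protocol enforces accountability.
   Context: Model. There are $n$ agents $\mathcal N=\{1,\dots,n\}$ in a synchronous system with rounds $m=1,2,\dots$. Evolving graphs. An evolving graph is a sequence $G=(G^m)_{m\ge1}$ of undirected graphs on $\mathcal N$. Before execution an oblivious adversary fixes some $G\in\mathcal G^*$, where the set $\mathcal G^*$ of possible evolving graphs is common knowledge. At round $m$, before acting, agent $i$ learns a set $\mathcal G_i^m$ of graphs containing $G^m$; this at least determines $i$'s round-$m$ neighbours. Actions. In each round, every pair of neighbours $i,j$ simultaneously chooses an individual action toward each other: - defect: omit messages; - cooperate: send its value plus monitoring information; - punish: send messages while causing a utility loss to the other. Each learns the other's individual action only at the end of the round. A round-$m$ action of $i$ lists its individual actions toward all of its round-$m$ neighbours. A history is the sequence of past action profiles together with $G$. An information set $I_i$ of $i$ is the set of histories consistent with $i$'s observations, which are: the sets $\mathcal G_i^{m'}$, $i$'s own past actions, and the individual actions of neighbours toward $i$. Agents have perfect recall. $\mathcal I_i(G)$ denotes $i$'s information sets compatible with $G$. A strategy $\sigma_i$ maps each information set to a distribution over actions; a protocol is a strategy profile $\vec\sigma$. Utility. In each round, for each neighbour $j$, agent $i$ gets: - benefit $\beta$ if $j$ cooperates or punishes (and $i$ does not avoid a punishment); - cost $1$ if $i$ cooperates or punishes; - cost $\alpha\ge0$ for receiving $j$'s messages; - loss $\pi$ if $j$ punishes $i$. Utilities are discounted by $\delta\in(0,1)$.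 We write $u_i(\vec\sigma\mid G,h)$ for the expected sum over rounds $m'\ge m$ of $\delta^{m'-m}$ times the round-$m'$ utility, given a round-$m$ history $h$. Then $u_i(\vec\sigma\mid G,I_i)=\sum_{h\in I_i}\mu(h\mid G,I_i)\,u_i(\vec\sigma\mid G,h)$ for a belief system $\mu$. Consistent beliefs. A belief system $\mu$ is consistent with $\vec\sigma$ and $\mathcal G^*$ if there are completely mixed protocols $\vec\sigma^c\to\vec\sigma$ such that for all $G\in\mathcal G^*$, $i$, $I_i$ and $h\in I_i$, $$\mu(h\mid G,I_i)=\lim_c \Pr^{\vec\sigma^c}(h\mid G)\Big/\sum_{h'\in I_i}\Pr^{\vec\sigma^c}(h'\mid G).$$ Equilibrium. $\vec\sigma^*$ is a $\mathcal G^*$-Oblivious Adversary Perfect Equilibrium ($\mathcal G^*$-OAPE) if some such consistent $\mu^*$ satisfies, for all $G\in\mathcal G^*$, agents $i$, strategies $\sigma_i$ and $I_i\in\mathcal I_i(G)$, $$u_i(\vec\sigma^*\mid G,I_i)\ge u_i((\sigma_i,\vec\sigma^*_{-i})\mid G,I_i).$$ A protocol enforces accountability if (1) agents always cooperate until some agent deviates, and (2) it is a $\mathcal G^*$-OAPE. Causal influence. An $i$-edge of $G$ is a pair $(j,m)$ with $\{i,j\}$ an edge of $G^m$. $(j,m)\leadsto^G(l,m')$ means: $m<m'$ and there is a chain $j=o_0,o_1,\dots,o_k=l$ ($k\ge0$) and rounds $m\le m_1<\dots<m_k<m'$ with $\{o_{t-1},o_t\}$ an edge of $G^{m_t}$.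 $(j,m)\leadsto_i^G(l,m')$ means the same with no intermediate agent $o_t$ ($0\le t<k$) equal to $i$. Punishment opportunities. A punishment opportunity (PO) of $i$ for $i$-edge $(j,m)$ in $G$ is an $i$-edge $(l,m')$ with $(j,m)\leadsto_i^G(l,m')$. The adversary is restricted by timely punishments if there is $\rho>0$ such that for every $G\in\mathcal G^*$, agent $i$ and $i$-edge $(j,m)$ of $G$ there is a PO $(l,m')$ of $i$ for $(j,m)$ with $m'<m+\rho$. *)

theory Defs
  imports "HOL-Probability.Probability"
begin

text \<open>Agents are the naturals below n; rounds are indexed from 0.
  A graph is a set of (directed copies of) edges; undirectedness is symmetry.\<close>

type_synonym graph = "(nat \<times> nat) set"
type_synonym egraph = "nat \<Rightarrow> graph"

datatype act = Defect | Cooperate | Punish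

text \<open>A round action of an agent i: individual action toward each neighbour j
  (Some a), None for non-neighbours.\<close>
type_synonym ract = "nat \<Rightarrow> act option"
text \<open>Action profile of a round: p i j = individual action of i toward j.\<close>
type_synonym profile = "nat \<Rightarrow> ract"
text \<open>A history: the evolving graph together with the past action profiles;
  a history with m profiles is a round-m history.\<close>
type_synonym history = "egraph \<times> profile list"
text \<open>Observations of an agent: graph information sets, own past actions,
  past individual actions of neighbours toward it.\<close>
type_synonym obs = "graph set list \<times> ract list \<times> ract list"
type_synonym strategy = "obs \<Rightarrow> ract pmf"
type_synonym protocol = "nat \<Rightarrow> strategy"
type_synonym beliefs = "egraph \<Rightarrow> nat \<Rightarrow> history set \<Rightarrow> history \<Rightarrow> real"

definition wf_graph :: "nat \<Rightarrow> graph \<Rightarrow> bool" where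
  "wf_graph n H \<longleftrightarrow> sym H \<and> irrefl H \<and> H \<subseteq> {..<n} \<times> {..<n}"

definition wf_egraphs :: "nat \<Rightarrow> egraph set \<Rightarrow> bool" where
  "wf_egraphs n Gs \<longleftrightarrow> (\<forall>G\<in>Gs. \<forall>m. wf_graph n (G m))"

text \<open>Ginfo G i m = the set of graphs \<G>_i^m learnt by i before acting in round m.\<close>
definition info_ok :: "nat \<Rightarrow> egraph set \<Rightarrow> (egraph \<Rightarrow> nat \<Rightarrow> nat \<Rightarrow> graph set) \<Rightarrow> bool" where
  "info_ok n Gs Ginfo \<longleftrightarrow> (\<forall>G\<in>Gs. \<forall>i<n. \<forall>m.
      G m \<in> Ginfo G i m \<and>
      (\<forall>H\<in>Ginfo G i m. wf_graph n H \<and> (\<forall>j. ((i,j) \<in> H) = ((i,j) \<in> G m))))"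

definition valid_ract :: "graph \<Rightarrow> nat \<Rightarrow> ract \<Rightarrow> bool" where
  "valid_ract H i a \<longleftrightarrow> (\<forall>j. (a j \<noteq> None) = ((i,j) \<in> H))"

definition valid_profile :: "graph \<Rightarrow> profile \<Rightarrow> bool" where
  "valid_profile H p \<longleftrightarrow> (\<forall>i. valid_ract H i (p i))"

definition valid_hist :: "egraph set \<Rightarrow> history \<Rightarrow> bool" where
  "valid_hist Gs h \<longleftrightarrow> fst h \<in> Gs \<and>
     (\<forall>k<length (snd h). valid_profile (fst h k) (snd h ! k))"

definition obs :: "(egraph \<Rightarrow> nat \<Rightarrow> nat \<Rightarrow> graph set) \<Rightarrow> nat \<Rightarrow> history \<Rightarrow> obs" where
  "obs Ginfo i h =
     (map (\<lambda>k. Ginfo (fst h) i k) [0..<Suc (length (snd h))],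
      map (\<lambda>p. p i) (snd h),
      map (\<lambda>p. \<lambda>j. p j i) (snd h))"

definition infoset :: "egraph set \<Rightarrow> (egraph \<Rightarrow> nat \<Rightarrow> nat \<Rightarrow> graph set) \<Rightarrow> nat \<Rightarrow> history \<Rightarrow> history set" where
  "infoset Gs Ginfo i h = {h'. valid_hist Gs h' \<and> obs Ginfo i h' = obs Ginfo i h}"

definition infosets_G :: "egraph set \<Rightarrow> (egraph \<Rightarrow> nat \<Rightarrow> nat \<Rightarrow> graph set) \<Rightarrow> nat \<Rightarrow> egraph \<Rightarrow> history set set" where
  "infosets_G Gs Ginfo i G = {infoset Gs Ginfo i h | h. valid_hist Gs h \<and> fst h = G}"

definition valid_strategy :: "egraph set \<Rightarrow> (egraph \<Rightarrow> nat \<Rightarrow> nat \<Rightarrow> graph set) \<Rightarrow> nat \<Rightarrow> strategy \<Rightarrow> bool" where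
  "valid_strategy Gs Ginfo i s \<longleftrightarrow> (\<forall>h. valid_hist Gs h \<longrightarrow>
     set_pmf (s (obs Ginfo i h)) \<subseteq> {a. valid_ract (fst h (length (snd h))) i a})"

definition completely_mixed_strategy :: "egraph set \<Rightarrow> (egraph \<Rightarrow> nat \<Rightarrow> nat \<Rightarrow> graph set) \<Rightarrow> nat \<Rightarrow> strategy \<Rightarrow> bool" where
  "completely_mixed_strategy Gs Ginfo i s \<longleftrightarrow> valid_strategy Gs Ginfo i s \<and>
     (\<forall>h. valid_hist Gs h \<longrightarrow> (\<forall>a. valid_ract (fst h (length (snd h))) i a \<longrightarrow>
        pmf (s (obs Ginfo i h)) a > 0))"

definition valid_protocol :: "nat \<Rightarrow> egraph set \<Rightarrow> (egraph \<Rightarrow> nat \<Rightarrow> nat \<Rightarrow> graph set) \<Rightarrow> protocol \<Rightarrow> bool" where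
  "valid_protocol n Gs Ginfo \<sigma> \<longleftrightarrow> (\<forall>i<n. valid_strategy Gs Ginfo i (\<sigma> i))"

definition completely_mixed :: "nat \<Rightarrow> egraph set \<Rightarrow> (egraph \<Rightarrow> nat \<Rightarrow> nat \<Rightarrow> graph set) \<Rightarrow> protocol \<Rightarrow> bool" where
  "completely_mixed n Gs Ginfo \<sigma> \<longleftrightarrow> (\<forall>i<n. completely_mixed_strategy Gs Ginfo i (\<sigma> i))"

text \<open>Distribution of the next action profile after history h: agents 0..n-1
  choose independently.\<close>
definition profile_pmf :: "nat \<Rightarrow> (egraph \<Rightarrow> nat \<Rightarrow> nat \<Rightarrow> graph set) \<Rightarrow> protocol \<Rightarrow> history \<Rightarrow> profile pmf" where
  "profile_pmf n Ginfo \<sigma> h =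
     fold (\<lambda>i P. bind_pmf P (\<lambda>p. map_pmf (\<lambda>a. p(i := a)) (\<sigma> i (obs Ginfo i h))))
          [0..<n] (return_pmf (\<lambda>_ _. None))"

definition extend :: "history \<Rightarrow> profile \<Rightarrow> history" where
  "extend h p = (fst h, snd h @ [p])"

fun run :: "nat \<Rightarrow> (egraph \<Rightarrow> nat \<Rightarrow> nat \<Rightarrow> graph set) \<Rightarrow> protocol \<Rightarrow> nat \<Rightarrow> history \<Rightarrow> history pmf" where
  "run n Ginfo \<sigma> 0 h = return_pmf h"
| "run n Ginfo \<sigma> (Suc k) h =
     bind_pmf (run n Ginfo \<sigma> k h) (\<lambda>h'. map_pmf (extend h') (profile_pmf n Ginfo \<sigma> h'))"

definition sends :: "act option \<Rightarrow> bool" where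
  "sends a \<longleftrightarrow> a = Some Cooperate \<or> a = Some Punish"

definition round_util :: "real \<Rightarrow> real \<Rightarrow> real \<Rightarrow> nat \<Rightarrow> egraph \<Rightarrow> nat \<Rightarrow> profile \<Rightarrow> real" where
  "round_util \<beta> \<alpha> \<pi> i G m p =
     (\<Sum>j\<in>{j. (i,j) \<in> G m}.
        (if sends (p j i) then \<beta> else 0)
      - (if sends (p i j) then 1 else 0)
      - (if sends (p j i) then \<alpha> else 0)
      - (if p j i = Some Punish then \<pi> else 0))"

definition util :: "nat \<Rightarrow> (egraph \<Rightarrow> nat \<Rightarrow> nat \<Rightarrow> graph set) \<Rightarrow> real \<Rightarrow> real \<Rightarrow> real \<Rightarrow> real \<Rightarrow>
                    protocol \<Rightarrow> nat \<Rightarrow> history \<Rightarrow> real" where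
  "util n Ginfo \<beta> \<alpha> \<pi> \<delta> \<sigma> i h =
     (\<Sum>k. \<delta> ^ k * measure_pmf.expectation (run n Ginfo \<sigma> (Suc k) h)
              (\<lambda>h'. round_util \<beta> \<alpha> \<pi> i (fst h') (length (snd h') - 1) (last (snd h'))))"

definition Pr :: "nat \<Rightarrow> (egraph \<Rightarrow> nat \<Rightarrow> nat \<Rightarrow> graph set) \<Rightarrow> protocol \<Rightarrow> egraph \<Rightarrow> history \<Rightarrow> real" where
  "Pr n Ginfo \<sigma> G h = pmf (run n Ginfo \<sigma> (length (snd h)) (G, [])) h"

definition consistent :: "nat \<Rightarrow> egraph set \<Rightarrow> (egraph \<Rightarrow> nat \<Rightarrow> nat \<Rightarrow> graph set) \<Rightarrow> protocol \<Rightarrow> beliefs \<Rightarrow> bool" where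
  "consistent n Gs Ginfo \<sigma> \<mu> \<longleftrightarrow>
    (\<exists>\<sigma>c :: nat \<Rightarrow> protocol.
       (\<forall>c. completely_mixed n Gs Ginfo (\<sigma>c c)) \<and>
       (\<forall>i<n. \<forall>h. valid_hist Gs h \<longrightarrow> (\<forall>a.
          (\<lambda>c. pmf (\<sigma>c c i (obs Ginfo i h)) a) \<longlonglongrightarrow> pmf (\<sigma> i (obs Ginfo i h)) a)) \<and>
       (\<forall>G\<in>Gs. \<forall>i<n. \<forall>I\<in>infosets_G Gs Ginfo i G. \<forall>h\<in>I.
          (\<lambda>c. Pr n Ginfo (\<sigma>c c) G h / infsum (Pr n Ginfo (\<sigma>c c) G) I) \<longlonglongrightarrow> \<mu> G i I h))"

definition util_I :: "nat \<Rightarrow> (egraph \<Rightarrow> nat \<Rightarrow> nat \<Rightarrow> graph set) \<Rightarrow> real \<Rightarrow> real \<Rightarrow> real \<Rightarrow> real \<Rightarrow>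
                      beliefs \<Rightarrow> protocol \<Rightarrow> egraph \<Rightarrow> nat \<Rightarrow> history set \<Rightarrow> real" where
  "util_I n Ginfo \<beta> \<alpha> \<pi> \<delta> \<mu> \<sigma> G i I =
     infsum (\<lambda>h. \<mu> G i I h * util n Ginfo \<beta> \<alpha> \<pi> \<delta> \<sigma> i h) I"

definition OAPE :: "nat \<Rightarrow> egraph set \<Rightarrow> (egraph \<Rightarrow> nat \<Rightarrow> nat \<Rightarrow> graph set) \<Rightarrow> real \<Rightarrow> real \<Rightarrow> real \<Rightarrow> real \<Rightarrow> protocol \<Rightarrow> bool" where
  "OAPE n Gs Ginfo \<beta> \<alpha> \<pi> \<delta> \<sigma> \<longleftrightarrow> valid_protocol n Gs Ginfo \<sigma> \<and>
     (\<exists>\<mu>. consistent n Gs Ginfo \<sigma> \<mu> \<and>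
        (\<forall>G\<in>Gs. \<forall>i<n. \<forall>s. valid_strategy Gs Ginfo i s \<longrightarrow>
           (\<forall>I\<in>infosets_G Gs Ginfo i G.
              util_I n Ginfo \<beta> \<alpha> \<pi> \<delta> \<mu> \<sigma> G i I \<ge> util_I n Ginfo \<beta> \<alpha> \<pi> \<delta> \<mu> (\<sigma>(i := s)) G i I)))"

definition coop_action :: "egraph \<Rightarrow> nat \<Rightarrow> nat \<Rightarrow> ract" where
  "coop_action G m i = (\<lambda>j. if (i,j) \<in> G m then Some Cooperate else None)"

definition all_coop :: "history \<Rightarrow> bool" where
  "all_coop h \<longleftrightarrow> (\<forall>k<length (snd h). \<forall>i j. (snd h ! k) i j = None \<or> (snd h ! k) i j = Some Cooperate)"

definition enforces_accountability :: "nat \<Rightarrow> egraph set \<Rightarrow> (egraph \<Rightarrow> nat \<Rightarrow> nat \<Rightarrow> graph set) \<Rightarrow> real \<Rightarrow> real \<Rightarrow> real \<Rightarrow> real \<Rightarrow> protocol \<Rightarrow> bool" where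
  "enforces_accountability n Gs Ginfo \<beta> \<alpha> \<pi> \<delta> \<sigma> \<longleftrightarrow>
     (\<forall>h. valid_hist Gs h \<and> all_coop h \<longrightarrow>
        (\<forall>i<n. \<sigma> i (obs Ginfo i h) = return_pmf (coop_action (fst h) (length (snd h)) i))) \<and>
     OAPE n Gs Ginfo \<beta> \<alpha> \<pi> \<delta> \<sigma>"

definition influences_avoiding :: "egraph \<Rightarrow> nat \<Rightarrow> nat \<times> nat \<Rightarrow> nat \<times> nat \<Rightarrow> bool" where
  "influences_avoiding G i jm lm' \<longleftrightarrow> (case jm of (j, m) \<Rightarrow> case lm' of (l, m') \<Rightarrow>
     m < m' \<and>
     (\<exists>k (ch::nat \<Rightarrow> nat) (r::nat \<Rightarrow> nat).
        ch 0 = j \<and> ch k = l \<and>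
        (\<forall>t\<in>{1..k}. (ch (t - 1), ch t) \<in> G (r t)) \<and>
        (\<forall>t\<in>{1..k}. m \<le> r t \<and> r t < m') \<and>
        (\<forall>t\<in>{1..<k}. r t < r (Suc t)) \<and>
        (\<forall>t<k. ch t \<noteq> i)))"

definition i_edge :: "egraph \<Rightarrow> nat \<Rightarrow> nat \<times> nat \<Rightarrow> bool" where
  "i_edge G i jm \<longleftrightarrow> (i, fst jm) \<in> G (snd jm)"

definition punishment_opportunity :: "egraph \<Rightarrow> nat \<Rightarrow> nat \<times> nat \<Rightarrow> nat \<times> nat \<Rightarrow> bool" where
  "punishment_opportunity G i jm lm' \<longleftrightarrow> i_edge G i lm' \<and> influences_avoiding G i jm lm'"

definition timely_punishments :: "nat \<Rightarrow> egraph set \<Rightarrow> bool" where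
  "timely_punishments n Gs \<longleftrightarrow> (\<exists>\<rho>::nat. \<rho> > 0 \<and>
     (\<forall>G\<in>Gs. \<forall>i<n. \<forall>j m. i_edge G i (j, m) \<longrightarrow>
        (\<exists>l m'. punishment_opportunity G i (j, m) (l, m') \<and> m' < m + \<rho>)))"

end

theory Submission
  imports Defs
begin

text \<open>Choose a horizon \<open>\<rho>\<close> so long that \<open>2 \<delta>\<^sup>\<rho> / (1 - \<delta>)\<close> times the largest possible
  round utility is below 1, the cost of cooperating. Without timely punishments some agent \<open>i\<close>
  has an edge \<open>(j,m)\<close> without punishment opportunity before round \<open>m + \<rho>\<close>. Let \<open>i\<close> defect
  towards \<open>j\<close> in round \<open>m\<close> and otherwise cooperate up to round \<open>m + \<rho>\<close>. Agents not reached
  by the defection along a chain avoiding \<open>i\<close> see exactly the cooperative play and keep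
  cooperating, and the reached ones are not neighbours of \<open>i\<close> before round \<open>m + \<rho>\<close>. So \<open>i\<close>
  gains 1 in round \<open>m\<close>, nothing changes for \<open>i\<close> in rounds \<open>m+1, \<dots>, m+\<rho>-1\<close>, and later
  \<open>i\<close> loses less than 1. Since the protocol cooperates with probability 1 along the
  all-cooperative history, consistent beliefs put mass 1 on that history at \<open>i\<close>'s information
  set in round \<open>m\<close>, where the deviation is therefore profitable.\<close>

lemma fold_fun_upd_eq:
  "fold (\<lambda>l p. p(l := q l)) xs p0 = (\<lambda>l. if l \<in> set xs then q l else p0 l)"
  by (induction xs arbitrary: p0) (auto simp: fun_eq_iff)

lemma set_fold_bind_upd:
  assumes "p \<in> set_pmf (fold (\<lambda>l P. bind_pmf P (\<lambda>p. map_pmf (\<lambda>a. p(l := a)) (D l))) xs P0)"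
  shows "\<exists>p0\<in>set_pmf P0. (\<forall>l\<in>set xs. p l \<in> set_pmf (D l)) \<and> (\<forall>l. l \<notin> set xs \<longrightarrow> p l = p0 l)"
  using assms
proof (induction xs arbitrary: P0)
  case (Cons x xs)
  from Cons.prems have "p \<in> set_pmf (fold (\<lambda>l P. bind_pmf P (\<lambda>p. map_pmf (\<lambda>a. p(l := a)) (D l))) xs
     (bind_pmf P0 (\<lambda>p. map_pmf (\<lambda>a. p(x := a)) (D x))))"
    by (simp only: fold_Cons comp_apply)
  from Cons.IH[OF this] obtain p1 where p1: "p1 \<in> set_pmf (bind_pmf P0 (\<lambda>p. map_pmf (\<lambda>a. p(x := a)) (D x)))"
    "\<forall>l\<in>set xs. p l \<in> set_pmf (D l)" "\<forall>l. l \<notin> set xs \<longrightarrow> p l = p1 l"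
    by blast
  then obtain q a where "q \<in> set_pmf P0" "a \<in> set_pmf (D x)" "p1 = q(x := a)" by auto
  with p1 show ?case by (intro bexI[of _ q]) auto
qed (auto intro: bexI[of _ p])

lemma fold_bind_upd_return:
  assumes "\<forall>l\<in>set xs. D l = return_pmf (q l)"
  shows "fold (\<lambda>l P. bind_pmf P (\<lambda>p. map_pmf (\<lambda>a. p(l := a)) (D l))) xs (return_pmf p0)
       = return_pmf (fold (\<lambda>l p. p(l := q l)) xs p0)"
  using assms by (induction xs arbitrary: p0) (simp_all add: bind_return_pmf)

lemma pmf_bind_pmf_ge: "pmf M y * pmf (f y) x \<le> pmf (bind_pmf M f) x"
proof -
  have "(\<lambda>z. indicator {y} z * pmf (f z) x) = (\<lambda>z. indicator {y} z * pmf (f y) x)"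
    by (auto simp: fun_eq_iff indicator_def)
  then have "pmf M y * pmf (f y) x = (\<integral>z. indicator {y} z * pmf (f z) x \<partial>measure_pmf M)"
    by (simp add: measure_pmf_single)
  also have "\<dots> \<le> (\<integral>z. pmf (f z) x \<partial>measure_pmf M)"
    by (intro integral_mono measure_pmf.integrable_const_bound[where B=1])
       (auto simp: indicator_def pmf_le_1)
  finally show ?thesis by (simp add: pmf_bind)
qed

lemma pmf_map_pmf_ge: "pmf P y \<le> pmf (map_pmf g P) (g y)"
  unfolding pmf_map by (simp flip: measure_pmf_single add: measure_pmf.finite_measure_mono)

lemma pmf_fold_bind_upd_ge:
  "pmf P0 p0 * (\<Prod>l\<leftarrow>xs. pmf (D l) (q l))
   \<le> pmf (fold (\<lambda>l P. bind_pmf P (\<lambda>p. map_pmf (\<lambda>a. p(l := a)) (D l))) xs P0)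
         (fold (\<lambda>l p. p(l := q l)) xs p0)"
proof (induction xs arbitrary: P0 p0)
  case (Cons x xs)
  define P1 where "P1 = bind_pmf P0 (\<lambda>p. map_pmf (\<lambda>a. p(x := a)) (D x))"
  have "pmf P0 p0 * pmf (D x) (q x) \<le> pmf P0 p0 * pmf (map_pmf (\<lambda>a. p0(x := a)) (D x)) (p0(x := q x))"
    by (intro mult_left_mono pmf_map_pmf_ge) simp
  also have "\<dots> \<le> pmf P1 (p0(x := q x))"
    unfolding P1_def by (rule pmf_bind_pmf_ge)
  finally have first: "pmf P0 p0 * pmf (D x) (q x) \<le> pmf P1 (p0(x := q x))" .
  have "pmf P0 p0 * (\<Prod>l\<leftarrow>x # xs. pmf (D l) (q l))
      = pmf P0 p0 * pmf (D x) (q x) * (\<Prod>l\<leftarrow>xs. pmf (D l) (q l))"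
    by (simp add: mult.assoc)
  also have "\<dots> \<le> pmf P1 (p0(x := q x)) * (\<Prod>l\<leftarrow>xs. pmf (D l) (q l))"
    by (rule mult_right_mono[OF first]) (induction xs; simp)
  also note Cons.IH[of P1]
  finally show ?case unfolding P1_def by (simp only: fold_Cons comp_apply)
qed simp

lemma expectation_pmf_const:
  fixes f :: "'a \<Rightarrow> real"
  assumes "\<forall>x\<in>set_pmf M. f x = c"
  shows "measure_pmf.expectation M f = c"
proof -
  have "measure_pmf.expectation M f = measure_pmf.expectation M (\<lambda>_. c)"
    by (rule integral_cong_AE) (use assms in \<open>auto simp: AE_measure_pmf_iff\<close>)
  then show ?thesis by simp
qed

lemma abs_expectation_pmf_le:
  fixes f :: "'a \<Rightarrow> real"
  assumes "\<forall>x\<in>set_pmf M. \<bar>f x\<bar> \<le> B"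
  shows "\<bar>measure_pmf.expectation M f\<bar> \<le> B"
proof -
  have ae: "AE x in measure_pmf M. \<bar>f x\<bar> \<le> B" using assms by (simp add: AE_measure_pmf_iff)
  have int: "integrable (measure_pmf M) f"
    by (rule measure_pmf.integrable_const_bound[where B=B]) (use ae in simp_all)
  have "- B \<le> measure_pmf.expectation M f"
    by (rule measure_pmf.integral_ge_const[OF int]) (use ae in \<open>auto elim!: eventually_mono\<close>)
  moreover have "measure_pmf.expectation M f \<le> B"
    by (rule measure_pmf.integral_le_const[OF int]) (use ae in \<open>auto elim!: eventually_mono\<close>)
  ultimately show ?thesis by simp
qed

lemma infsum_pmf_eq_prob: "infsum (pmf M) A = measure_pmf.prob M A"
  by (simp add: measure_pmf_conv_infsetsum infsetsum_infsum pmf_abs_summable)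

lemma conditional_pmf_tendsto_self:
  fixes M :: "nat \<Rightarrow> 'a pmf"
  assumes lim: "(\<lambda>x. pmf (M x) a) \<longlonglongrightarrow> 1" and "a \<in> I"
  shows "(\<lambda>x. pmf (M x) a / measure_pmf.prob (M x) I) \<longlonglongrightarrow> 1"
proof (rule tendsto_sandwich[OF _ _ lim tendsto_const])
  have a_le: "pmf (M x) a \<le> measure_pmf.prob (M x) I" for x
    using \<open>a \<in> I\<close> by (simp flip: measure_pmf_single add: measure_pmf.finite_measure_mono)
  have "\<forall>\<^sub>F x in sequentially. 0 < pmf (M x) a"
    using order_tendstoD(1)[OF lim, of 0] by simp
  then have pos: "\<forall>\<^sub>F x in sequentially. 0 < measure_pmf.prob (M x) I"
    by eventually_elim (rule less_le_trans[OF _ a_le])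
  then show "\<forall>\<^sub>F x in sequentially. pmf (M x) a \<le> pmf (M x) a / measure_pmf.prob (M x) I"
  proof eventually_elim
    case (elim x)
    have "pmf (M x) a * measure_pmf.prob (M x) I \<le> pmf (M x) a" by (rule mult_left_le) simp_all
    with elim show ?case by (simp add: le_divide_eq)
  qed
  show "\<forall>\<^sub>F x in sequentially. pmf (M x) a / measure_pmf.prob (M x) I \<le> 1"
    using pos by eventually_elim (simp add: a_le)
qed

lemma conditional_pmf_tendsto_other:
  fixes M :: "nat \<Rightarrow> 'a pmf"
  assumes lim: "(\<lambda>x. pmf (M x) a) \<longlonglongrightarrow> 1" and "a \<in> I" "h \<noteq> a"
  shows "(\<lambda>x. pmf (M x) h / measure_pmf.prob (M x) I) \<longlonglongrightarrow> 0"
proof (rule tendsto_sandwich[OF _ _ tendsto_const])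
  let ?P = "\<lambda>x. pmf (M x) a"
  have "(\<lambda>x. (1 - ?P x) / ?P x) \<longlonglongrightarrow> (1 - 1) / 1"
    by (intro tendsto_intros lim) simp
  then show "(\<lambda>x. (1 - ?P x) / ?P x) \<longlonglongrightarrow> 0" by simp
  show "\<forall>\<^sub>F x in sequentially. 0 \<le> pmf (M x) h / measure_pmf.prob (M x) I"
    by simp
  have "\<forall>\<^sub>F x in sequentially. 0 < ?P x"
    using order_tendstoD(1)[OF lim, of 0] by simp
  then show "\<forall>\<^sub>F x in sequentially. pmf (M x) h / measure_pmf.prob (M x) I \<le> (1 - ?P x) / ?P x"
  proof eventually_elim
    case (elim x)
    have "pmf (M x) h + ?P x = measure_pmf.prob (M x) {h, a}"
      using \<open>h \<noteq> a\<close> by (simp add: measure_measure_pmf_finite)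
    then have "pmf (M x) h \<le> 1 - ?P x"
      using measure_pmf.prob_le_1[of "M x" "{h, a}"] by linarith
    then have "pmf (M x) h / measure_pmf.prob (M x) I \<le> (1 - ?P x) / measure_pmf.prob (M x) I"
      by (rule divide_right_mono) simp
    also have "\<dots> \<le> (1 - ?P x) / ?P x"
    proof (rule divide_left_mono)
      show a_le: "?P x \<le> measure_pmf.prob (M x) I"
        using \<open>a \<in> I\<close> by (simp flip: measure_pmf_single add: measure_pmf.finite_measure_mono)
      show "0 < measure_pmf.prob (M x) I * ?P x"
        using mult_pos_pos[OF less_le_trans[OF elim a_le] elim] .
    qed (simp add: pmf_le_1)
    finally show ?case .
  qed
qed

lemma conditional_pmf_tendsto:
  fixes M :: "nat \<Rightarrow> 'a pmf"
  assumes "(\<lambda>x. pmf (M x) a) \<longlonglongrightarrow> 1" and "a \<in> I"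
  shows "(\<lambda>x. pmf (M x) h / measure_pmf.prob (M x) I) \<longlonglongrightarrow> (if h = a then 1 else 0)"
  using conditional_pmf_tendsto_self[OF assms] conditional_pmf_tendsto_other[OF assms] by auto

lemma discounted_gain_ge:
  fixes x y :: "nat \<Rightarrow> real" and \<delta> C :: real
  assumes d0: "0 < \<delta>" and d1: "\<delta> < 1" and r0: "0 < \<rho>"
    and bnd_x: "\<And>k. \<bar>x k\<bar> \<le> C" and bnd_y: "\<And>k. \<bar>y k\<bar> \<le> C"
    and early: "\<And>k. k < \<rho> \<Longrightarrow> y k = x k + (if k = 0 then 1 else 0)"
  shows "1 - 2 * C * (\<delta> ^ \<rho> / (1 - \<delta>)) \<le> (\<Sum>k. \<delta> ^ k * y k) - (\<Sum>k. \<delta> ^ k * x k)"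
proof -
  define tail where "tail k = (if \<rho> \<le> k then \<delta> ^ k else 0)" for k
  define e where "e k = (if k = 0 then 1 else 0) - 2 * C * tail k" for k
  have geo: "summable (\<lambda>k. C * \<delta> ^ k)"
    using d0 d1 by (intro summable_mult summable_geometric) simp
  have dominated: "summable (\<lambda>k. \<delta> ^ k * z k)" if "\<And>k. \<bar>z k\<bar> \<le> C" for z :: "nat \<Rightarrow> real"
  proof (rule summable_comparison_test'[OF geo])
    fix k
    have "\<delta> ^ k * \<bar>z k\<bar> \<le> \<delta> ^ k * C" by (rule mult_left_mono[OF that]) (use d0 in simp)
    then show "norm (\<delta> ^ k * z k) \<le> C * \<delta> ^ k" using d0 by (simp add: abs_mult mult.commute)
  qed
  have "(\<lambda>k. \<delta> ^ \<rho> * \<delta> ^ k) sums (\<delta> ^ \<rho> * (1 / (1 - \<delta>)))"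
    using d0 d1 by (intro sums_mult geometric_sums) simp
  then have "(\<lambda>k. tail (k + \<rho>)) sums (\<delta> ^ \<rho> / (1 - \<delta>))"
    by (simp add: tail_def power_add mult.commute)
  then have "tail sums (\<delta> ^ \<rho> / (1 - \<delta>) + (\<Sum>k<\<rho>. tail k))"
    by (simp only: sums_iff_shift)
  then have "tail sums (\<delta> ^ \<rho> / (1 - \<delta>))"
    by (simp add: tail_def)
  then have "(\<lambda>k. 2 * C * tail k) sums (2 * C * (\<delta> ^ \<rho> / (1 - \<delta>)))"
    by (rule sums_mult)
  from sums_diff[OF sums_single[of 0 "\<lambda>_. 1::real"] this]
  have e_sums: "e sums (1 - 2 * C * (\<delta> ^ \<rho> / (1 - \<delta>)))"
    by (simp add: e_def[abs_def])
  have e_le: "e k \<le> \<delta> ^ k * y k - \<delta> ^ k * x k" for k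
  proof (cases "k < \<rho>")
    case True
    then show ?thesis using early[OF True] by (simp add: e_def tail_def algebra_simps)
  next
    case False
    have "\<delta> ^ k * (- 2 * C) \<le> \<delta> ^ k * (y k - x k)"
      using bnd_x[of k] bnd_y[of k] d0 by (intro mult_left_mono) (simp_all add: abs_le_iff)
    then show ?thesis using False r0 by (simp add: e_def tail_def algebra_simps)
  qed
  have "1 - 2 * C * (\<delta> ^ \<rho> / (1 - \<delta>)) \<le> (\<Sum>k. \<delta> ^ k * y k - \<delta> ^ k * x k)"
    by (rule sums_le[OF e_le e_sums summable_sums[OF summable_diff[OF dominated[OF bnd_y] dominated[OF bnd_x]]]])
  also have "\<dots> = (\<Sum>k. \<delta> ^ k * y k) - (\<Sum>k. \<delta> ^ k * x k)"
    by (rule suminf_diff[OF dominated[OF bnd_y] dominated[OF bnd_x], symmetric])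
  finally show ?thesis .
qed

lemma discount_tail_small:
  fixes \<delta> K :: real
  assumes "0 < \<delta>" "\<delta> < 1"
  obtains \<rho> :: nat where "0 < \<rho>" "K * \<delta> ^ \<rho> < 1"
proof -
  have "(\<lambda>k. K * \<delta> ^ k) \<longlonglongrightarrow> K * 0"
    using assms by (intro tendsto_intros LIMSEQ_power_zero) auto
  then have "\<forall>\<^sub>F k in sequentially. K * \<delta> ^ k < 1"
    by (rule order_tendstoD(2)) simp
  then have "\<forall>\<^sub>F k in sequentially. 0 < k \<and> K * \<delta> ^ k < 1"
    by (rule eventually_conj[OF eventually_gt_at_top])
  then show ?thesis using that unfolding eventually_sequentially by blast
qed

lemma set_profile_pmf:
  assumes "p \<in> set_pmf (profile_pmf n Ginfo \<sigma> h)"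
  shows "\<forall>l<n. p l \<in> set_pmf (\<sigma> l (obs Ginfo l h))" and "\<forall>l\<ge>n. p l = (\<lambda>_. None)"
  using set_fold_bind_upd[of p "\<lambda>l. \<sigma> l (obs Ginfo l h)" "[0..<n]" "return_pmf (\<lambda>_ _. None)"] assms
  unfolding profile_pmf_def by auto

lemma profile_pmf_return:
  assumes "\<forall>l<n. \<sigma> l (obs Ginfo l h) = return_pmf (q l)" and "\<forall>l\<ge>n. q l = (\<lambda>_. None)"
  shows "profile_pmf n Ginfo \<sigma> h = return_pmf q"
proof -
  have "profile_pmf n Ginfo \<sigma> h = return_pmf (fold (\<lambda>l p. p(l := q l)) [0..<n] (\<lambda>_ _. None))"
    unfolding profile_pmf_def by (rule fold_bind_upd_return) (use assms in simp)
  also have "fold (\<lambda>l p. p(l := q l)) [0..<n] (\<lambda>_ _. None) = q"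
    using assms(2) by (auto simp: fold_fun_upd_eq fun_eq_iff)
  finally show ?thesis .
qed

lemma pmf_profile_pmf_ge:
  assumes "\<forall>l\<ge>n. q l = (\<lambda>_. None)"
  shows "(\<Prod>l<n. pmf (\<sigma> l (obs Ginfo l h)) (q l)) \<le> pmf (profile_pmf n Ginfo \<sigma> h) q"
proof -
  have "fold (\<lambda>l p. p(l := q l)) [0..<n] (\<lambda>_ _. None) = q"
    using assms by (auto simp: fold_fun_upd_eq fun_eq_iff)
  moreover have "(\<Prod>l<n. pmf (\<sigma> l (obs Ginfo l h)) (q l)) = (\<Prod>l\<leftarrow>[0..<n]. pmf (\<sigma> l (obs Ginfo l h)) (q l))"
    using prod.distinct_set_conv_list[of "[0..<n]" "\<lambda>l. pmf (\<sigma> l (obs Ginfo l h)) (q l)"]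
    by (simp add: atLeast0LessThan)
  ultimately show ?thesis
    using pmf_fold_bind_upd_ge[of "return_pmf (\<lambda>_ _. None)" "\<lambda>_ _. None"
        "\<lambda>l. \<sigma> l (obs Ginfo l h)" q "[0..<n]"]
    unfolding profile_pmf_def by simp
qed

lemma set_run_pmf:
  "h' \<in> set_pmf (run n Ginfo \<sigma> k h) \<Longrightarrow>
    fst h' = fst h \<and> length (snd h') = length (snd h) + k \<and> take (length (snd h)) (snd h') = snd h"
  by (induction k arbitrary: h') (auto simp: extend_def)

lemma obs_eqI:
  assumes "fst h1 = fst h2" "length (snd h1) = length (snd h2)"
    "\<And>r. r < length (snd h1) \<Longrightarrow> (snd h1 ! r) l = (snd h2 ! r) l \<and> (\<forall>x. (snd h1 ! r) x l = (snd h2 ! r) x l)"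
  shows "obs Ginfo l h1 = obs Ginfo l h2"
proof -
  have "map (\<lambda>p. p l) (snd h1) = map (\<lambda>p. p l) (snd h2)"
    by (rule nth_equalityI) (use assms in simp_all)
  moreover have "map (\<lambda>p. \<lambda>x. p x l) (snd h1) = map (\<lambda>p. \<lambda>x. p x l) (snd h2)"
    by (rule nth_equalityI) (use assms in \<open>simp_all add: fun_eq_iff\<close>)
  ultimately show ?thesis using assms(1,2) unfolding obs_def by simp
qed

lemma length_eq_if_obs_eq: "obs Ginfo l h1 = obs Ginfo l h2 \<Longrightarrow> length (snd h1) = length (snd h2)"
  unfolding obs_def by (drule arg_cong[where f="\<lambda>x. length (fst (snd x))"]) simp

lemma Ginfo_eq_if_obs_eq:
  assumes "obs Ginfo l h1 = obs Ginfo l h2"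
  shows "Ginfo (fst h1) l (length (snd h1)) = Ginfo (fst h2) l (length (snd h1))"
proof -
  have len: "length (snd h1) = length (snd h2)" using length_eq_if_obs_eq[OF assms] .
  have "map (Ginfo (fst h1) l) [0..<Suc (length (snd h1))] = map (Ginfo (fst h2) l) [0..<Suc (length (snd h2))]"
    using assms unfolding obs_def by simp
  then have "map (Ginfo (fst h1) l) [0..<Suc (length (snd h1))] ! length (snd h1)
      = map (Ginfo (fst h2) l) [0..<Suc (length (snd h2))] ! length (snd h1)"
    by simp
  then show ?thesis using len by (simp del: upt_Suc)
qed

lemma info_ok_same_neighbours:
  assumes "info_ok n Gs Ginfo" "G \<in> Gs" "G' \<in> Gs" "i < n" "Ginfo G i t = Ginfo G' i t"
  shows "((i,x) \<in> G t) = ((i,x) \<in> G' t)"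
proof -
  have "G t \<in> Ginfo G' i t" using assms unfolding info_ok_def by auto
  then show ?thesis using assms(1,3,4) unfolding info_ok_def by blast
qed

lemma abs_round_util_le:
  assumes "wf_graph n (G r)"
  shows "\<bar>round_util \<beta> \<alpha> \<pi> i G r p\<bar> \<le> real n * (\<bar>\<beta>\<bar> + 1 + \<bar>\<alpha>\<bar> + \<bar>\<pi>\<bar>)"
proof -
  let ?B = "\<bar>\<beta>\<bar> + 1 + \<bar>\<alpha>\<bar> + \<bar>\<pi>\<bar>"
  let ?N = "{x. (i,x) \<in> G r}"
  have sub: "?N \<subseteq> {..<n}" using assms unfolding wf_graph_def by auto
  have "\<bar>round_util \<beta> \<alpha> \<pi> i G r p\<bar> \<le> (\<Sum>x\<in>?N. ?B)"
    unfolding round_util_def by (rule order_trans[OF sum_abs sum_mono]) auto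
  also have "\<dots> = real (card ?N) * ?B" by simp
  also have "\<dots> \<le> real n * ?B"
    using card_mono[OF _ sub] by (intro mult_right_mono) auto
  finally show ?thesis .
qed

abbreviation last_round_util :: "real \<Rightarrow> real \<Rightarrow> real \<Rightarrow> nat \<Rightarrow> history \<Rightarrow> real" where
  "last_round_util \<beta> \<alpha> \<pi> i \<equiv> \<lambda>h. round_util \<beta> \<alpha> \<pi> i (fst h) (length (snd h) - 1) (last (snd h))"

lemma influences_avoiding_self: "m < r \<Longrightarrow> influences_avoiding G i (j,m) (j,r)"
  unfolding influences_avoiding_def by (simp, rule exI[of _ 0], rule exI[of _ "\<lambda>_. j"], auto)

lemma influences_avoiding_mono:
  "influences_avoiding G i (j,m) (l,r) \<Longrightarrow> r \<le> r' \<Longrightarrow> influences_avoiding G i (j,m) (l,r')"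
  unfolding influences_avoiding_def by (auto, blast intro: less_le_trans)

lemma influences_avoiding_step:
  assumes "influences_avoiding G i (j,m) (x,r)" "x \<noteq> i" "(x,l) \<in> G r"
  shows "influences_avoiding G i (j,m) (l, Suc r)"
proof -
  from assms(1) obtain k ch rr where A: "m < r" "ch 0 = j" "ch k = x"
    "\<forall>t\<in>{1..k}. (ch (t - 1), ch t) \<in> G (rr t)"
    "\<forall>t\<in>{1..k}. m \<le> rr t \<and> rr t < r"
    "\<forall>t\<in>{1..<k}. rr t < rr (Suc t)"
    "\<forall>t<k. ch t \<noteq> i"
    unfolding influences_avoiding_def by auto
  let ?ch = "ch(Suc k := l)" and ?rr = "rr(Suc k := r)"
  have "(?ch (t - 1), ?ch t) \<in> G (?rr t)" if "t \<in> {1..Suc k}" for t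
    using A assms(3) that by (cases "t = Suc k") auto
  moreover have "m \<le> ?rr t \<and> ?rr t < Suc r" if "t \<in> {1..Suc k}" for t
    using A that by (cases "t = Suc k") (auto simp: less_Suc_eq)
  moreover have "?rr t < ?rr (Suc t)" if "t \<in> {1..<Suc k}" for t
    using A that by (cases "t = k") auto
  moreover have "?ch t \<noteq> i" if "t < Suc k" for t
    using A assms(2) that by (cases "t = k") auto
  ultimately have "?ch 0 = j \<and> ?ch (Suc k) = l \<and>
      (\<forall>t\<in>{1..Suc k}. (?ch (t - 1), ?ch t) \<in> G (?rr t)) \<and>
      (\<forall>t\<in>{1..Suc k}. m \<le> ?rr t \<and> ?rr t < Suc r) \<and>
      (\<forall>t\<in>{1..<Suc k}. ?rr t < ?rr (Suc t)) \<and> (\<forall>t<Suc k. ?ch t \<noteq> i)"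
    using A(2) by auto
  then show ?thesis
    unfolding influences_avoiding_def prod.case using less_SucI[OF A(1)] by blast
qed

locale unpunished_edge =
  fixes n :: nat and Gs :: "egraph set" and Ginfo :: "egraph \<Rightarrow> nat \<Rightarrow> nat \<Rightarrow> graph set"
    and \<sigma> :: protocol and G :: egraph and i j m \<rho> :: nat
  assumes wf: "wf_egraphs n Gs"
    and info: "info_ok n Gs Ginfo"
    and G_in: "G \<in> Gs"
    and i_lt: "i < n"
    and edge: "(i,j) \<in> G m"
    and valid_\<sigma>: "valid_protocol n Gs Ginfo \<sigma>"
    and coop: "\<forall>h. valid_hist Gs h \<and> all_coop h \<longrightarrow>
        (\<forall>l<n. \<sigma> l (obs Ginfo l h) = return_pmf (coop_action (fst h) (length (snd h)) l))"
    and no_PO: "\<not> (\<exists>l m'. punishment_opportunity G i (j,m) (l,m') \<and> m' < m + \<rho>)"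
begin

definition coop_hist :: "nat \<Rightarrow> history" where
  "coop_hist t = (G, map (coop_action G) [0..<t])"

definition dev_action :: "nat \<Rightarrow> ract" where
  "dev_action r = (if r = m then (coop_action G m i)(j := Some Defect) else coop_action G r i)"

definition dev_profile :: "nat \<Rightarrow> profile" where
  "dev_profile r = (coop_action G r)(i := dev_action r)"

definition dev_hist :: "nat \<Rightarrow> history" where
  "dev_hist t = (G, map dev_profile [0..<t])"

text \<open>\<open>fst (snd ob)\<close> lists the own past actions, so its length is the current round.\<close>
definition dev_strategy :: strategy where
  "dev_strategy ob = (if \<exists>t\<ge>m. ob = obs Ginfo i (dev_hist t)
     then return_pmf (dev_action (length (fst (snd ob)))) else \<sigma> i ob)"

abbreviation \<sigma>_dev :: protocol where
  "\<sigma>_dev \<equiv> \<sigma>(i := dev_strategy)"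

definition influenced :: "nat \<Rightarrow> nat \<Rightarrow> bool" where
  "influenced l r \<longleftrightarrow> influences_avoiding G i (j,m) (l,r)"

lemma wf_G: "wf_graph n (G r)"
  using wf G_in unfolding wf_egraphs_def by auto

lemma sym_G: "(a,b) \<in> G r \<Longrightarrow> (b,a) \<in> G r"
  using wf_G[of r] unfolding wf_graph_def sym_def by blast

lemma irrefl_G: "(a,a) \<notin> G r"
  using wf_G[of r] unfolding wf_graph_def irrefl_def by blast

lemma bound_G: "(a,b) \<in> G r \<Longrightarrow> a < n \<and> b < n"
  using wf_G[of r] unfolding wf_graph_def by blast

lemma coop_action_beyond: "n \<le> l \<Longrightarrow> coop_action G r l = (\<lambda>_. None)"
  using bound_G by (fastforce simp: coop_action_def fun_eq_iff)

lemma coop_action_eq_None_iff: "(coop_action G r a b = None) = ((a,b) \<notin> G r)"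
  by (simp add: coop_action_def)

lemma valid_coop_action: "valid_ract (G r) l (coop_action G r l)"
  by (simp add: valid_ract_def coop_action_def)

lemma valid_dev_action: "valid_ract (G r) i (dev_action r)"
  using edge by (auto simp: valid_ract_def dev_action_def coop_action_def)

lemma dev_action_eq_coop: "\<not> (r = m \<and> l = j) \<Longrightarrow> dev_action r l = coop_action G r i l"
  by (auto simp: dev_action_def)

lemma dev_profile_self [simp]: "dev_profile r i = dev_action r"
  by (simp add: dev_profile_def)

lemma dev_profile_other: "l \<noteq> i \<Longrightarrow> dev_profile r l = coop_action G r l"
  by (simp add: dev_profile_def)

lemma dev_profile_eq_coop: "r \<noteq> m \<Longrightarrow> dev_profile r = coop_action G r"
  by (auto simp: dev_profile_def dev_action_def fun_eq_iff)

lemma dev_profile_eq_None_iff: "(dev_profile r a b = None) = ((a,b) \<notin> G r)"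
  using valid_dev_action[of r, unfolded valid_ract_def, rule_format, of b]
  by (cases "a = i") (auto simp: dev_profile_def coop_action_def)

lemma coop_hist_valid: "valid_hist Gs (coop_hist t)"
  using G_in by (simp add: coop_hist_def valid_hist_def valid_profile_def valid_coop_action)

lemma all_coop_coop_hist: "all_coop (coop_hist t)"
  by (simp add: coop_hist_def all_coop_def coop_action_def)

lemma coop_hist_simps [simp]:
  "fst (coop_hist t) = G" "length (snd (coop_hist t)) = t" "coop_hist 0 = (G, [])"
  "r < t \<Longrightarrow> snd (coop_hist t) ! r = coop_action G r"
  by (simp_all add: coop_hist_def)

lemma coop_hist_Suc: "coop_hist (Suc t) = extend (coop_hist t) (coop_action G t)"
  by (simp add: coop_hist_def extend_def)

lemma dev_hist_simps [simp]:
  "fst (dev_hist t) = G" "length (snd (dev_hist t)) = t"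
  "r < t \<Longrightarrow> snd (dev_hist t) ! r = dev_profile r"
  by (simp_all add: dev_hist_def)

lemma \<sigma>_coop_hist: "l < n \<Longrightarrow> \<sigma> l (obs Ginfo l (coop_hist t)) = return_pmf (coop_action G t l)"
  using coop coop_hist_valid[of t] all_coop_coop_hist[of t] by (metis coop_hist_simps(1,2))

lemma run_coop_hist: "run n Ginfo \<sigma> k (coop_hist t) = return_pmf (coop_hist (t + k))"
proof (induction k)
  case (Suc k)
  have "profile_pmf n Ginfo \<sigma> (coop_hist (t + k)) = return_pmf (coop_action G (t + k))"
    by (rule profile_pmf_return) (simp_all add: \<sigma>_coop_hist coop_action_beyond)
  with Suc show ?case by (simp add: coop_hist_Suc bind_return_pmf)
qed simp

lemma dev_strategy_valid: "valid_strategy Gs Ginfo i dev_strategy"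
  unfolding valid_strategy_def
proof (intro allI impI)
  fix h assume h: "valid_hist Gs h"
  show "set_pmf (dev_strategy (obs Ginfo i h)) \<subseteq> {a. valid_ract (fst h (length (snd h))) i a}"
  proof (cases "\<exists>t\<ge>m. obs Ginfo i h = obs Ginfo i (dev_hist t)")
    case True
    then obtain t where t: "obs Ginfo i h = obs Ginfo i (dev_hist t)" by blast
    have len: "length (snd h) = t" using length_eq_if_obs_eq[OF t] by simp
    have "Ginfo (fst h) i t = Ginfo G i t" using Ginfo_eq_if_obs_eq[OF t] len by simp
    then have "((i,x) \<in> G t) = ((i,x) \<in> fst h t)" for x
      using info_ok_same_neighbours[OF info _ G_in i_lt] h by (simp add: valid_hist_def)
    then have "valid_ract (fst h t) i (dev_action t)"
      using valid_dev_action[of t] by (simp add: valid_ract_def)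
    then show ?thesis using True len by (simp add: dev_strategy_def obs_def)
  next
    case False
    have "valid_strategy Gs Ginfo i (\<sigma> i)" using valid_\<sigma> i_lt unfolding valid_protocol_def by blast
    then have "set_pmf (\<sigma> i (obs Ginfo i h)) \<subseteq> {a. valid_ract (fst h (length (snd h))) i a}"
      using h unfolding valid_strategy_def by blast
    moreover have "dev_strategy (obs Ginfo i h) = \<sigma> i (obs Ginfo i h)"
      using False unfolding dev_strategy_def by (rule if_not_P)
    ultimately show ?thesis by simp
  qed
qed

definition agrees_dev :: "nat \<Rightarrow> history \<Rightarrow> bool" where
  "agrees_dev k h \<longleftrightarrow> valid_hist Gs h \<and> fst h = G \<and> length (snd h) = m + k \<and>
     (\<forall>r<m+k. \<forall>l x. (l = i \<or> \<not> influenced l r) \<longrightarrow> (snd h ! r) l x = dev_profile r l x)"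

lemma uninfluenced_mono: "\<not> influenced l t \<Longrightarrow> r \<le> t \<Longrightarrow> \<not> influenced l r"
  unfolding influenced_def using influences_avoiding_mono by blast

lemma influenced_self: "m < r \<Longrightarrow> influenced j r"
  unfolding influenced_def by (rule influences_avoiding_self)

lemma influenced_step: "influenced x r \<Longrightarrow> x \<noteq> i \<Longrightarrow> (x,l) \<in> G r \<Longrightarrow> influenced l (Suc r)"
  unfolding influenced_def by (rule influences_avoiding_step)

lemma neighbour_uninfluenced: "r < m + \<rho> \<Longrightarrow> (i,x) \<in> G r \<Longrightarrow> \<not> influenced x r"
  using no_PO unfolding punishment_opportunity_def i_edge_def influenced_def by auto

lemma agrees_dev_entry_eq_None_iff:
  assumes "agrees_dev k h" "r < m + k"
  shows "((snd h ! r) a b = None) = ((a,b) \<notin> G r)"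
proof -
  have "valid_hist Gs h" "fst h = G" "length (snd h) = m + k"
    using assms(1) by (simp_all add: agrees_dev_def)
  then have "valid_profile (G r) (snd h ! r)"
    using assms(2) unfolding valid_hist_def by auto
  then show ?thesis unfolding valid_profile_def valid_ract_def by blast
qed

lemma agrees_dev_0: "agrees_dev 0 (coop_hist m)"
  unfolding agrees_dev_def using coop_hist_valid[of m] by (simp add: dev_profile_eq_coop)

lemma obs_uninfluenced:
  assumes agr: "agrees_dev k h" and "l \<noteq> i" and unaff: "\<not> influenced l (m+k)"
  shows "obs Ginfo l h = obs Ginfo l (coop_hist (m+k))"
proof (rule obs_eqI)
  show "fst h = fst (coop_hist (m+k))" "length (snd h) = length (snd (coop_hist (m+k)))"
    using agr by (simp_all add: agrees_dev_def)
next
  fix r assume "r < length (snd h)"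
  then have r: "r < m + k" using agr by (simp add: agrees_dev_def)
  have ent: "\<And>l x. l = i \<or> \<not> influenced l r \<Longrightarrow> (snd h ! r) l x = dev_profile r l x"
    using agr r unfolding agrees_dev_def by blast
  have "(snd h ! r) l = coop_action G r l"
    using ent[of l] uninfluenced_mono[OF unaff] r \<open>l \<noteq> i\<close> by (simp add: fun_eq_iff dev_profile_other)
  moreover have "(snd h ! r) x l = coop_action G r x l" for x
  proof (cases "x = i")
    case True
    have "\<not> (r = m \<and> l = j)" using unaff influenced_self[of "m+k"] r by auto
    then show ?thesis using True ent[of i l] by (simp add: dev_action_eq_coop)
  next
    case False
    show ?thesis
    proof (cases "influenced x r")
      case True
      \<comment> \<open>otherwise the influence would have passed on to \<open>l\<close> by round \<open>m + k\<close>\<close>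
      have "(x,l) \<notin> G r"
        using influenced_step[OF True False] uninfluenced_mono[OF unaff, of "Suc r"] r by auto
      then show ?thesis
        using agrees_dev_entry_eq_None_iff[OF agr r] coop_action_eq_None_iff by metis
    qed (use ent[of x l] False in \<open>simp add: dev_profile_other\<close>)
  qed
  ultimately show "(snd h ! r) l = (snd (coop_hist (m+k)) ! r) l \<and>
      (\<forall>x. (snd h ! r) x l = (snd (coop_hist (m+k)) ! r) x l)"
    using r by simp
qed

lemma obs_deviator:
  assumes agr: "agrees_dev k h" and "k \<le> \<rho>"
  shows "obs Ginfo i h = obs Ginfo i (dev_hist (m+k))"
proof (rule obs_eqI)
  show "fst h = fst (dev_hist (m+k))" "length (snd h) = length (snd (dev_hist (m+k)))"
    using agr by (simp_all add: agrees_dev_def)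
next
  fix r assume "r < length (snd h)"
  then have r: "r < m + k" using agr by (simp add: agrees_dev_def)
  have ent: "\<And>l x. l = i \<or> \<not> influenced l r \<Longrightarrow> (snd h ! r) l x = dev_profile r l x"
    using agr r unfolding agrees_dev_def by blast
  have "(snd h ! r) x i = dev_profile r x i" for x
  proof (cases "x = i \<or> \<not> influenced x r")
    case False
    then have "(x,i) \<notin> G r"
      using neighbour_uninfluenced[of r x] sym_G[of x i r] r \<open>k \<le> \<rho>\<close> by auto
    then show ?thesis
      using agrees_dev_entry_eq_None_iff[OF agr r] dev_profile_eq_None_iff by metis
  qed (use ent in simp)
  then show "(snd h ! r) i = (snd (dev_hist (m+k)) ! r) i \<and>
      (\<forall>x. (snd h ! r) x i = (snd (dev_hist (m+k)) ! r) x i)"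
    using ent[of i] r by (simp add: fun_eq_iff)
qed

lemma dev_strategy_agrees_dev:
  assumes "agrees_dev k h" "k \<le> \<rho>"
  shows "dev_strategy (obs Ginfo i h) = return_pmf (dev_action (m+k))"
proof -
  have "length (fst (snd (obs Ginfo i h))) = m + k"
    using assms(1) by (simp add: obs_def agrees_dev_def)
  moreover have "\<exists>t\<ge>m. obs Ginfo i h = obs Ginfo i (dev_hist t)"
    using obs_deviator[OF assms] by (intro exI[of _ "m+k"]) simp
  ultimately show ?thesis unfolding dev_strategy_def by simp
qed

lemma profile_pmf_\<sigma>_dev:
  assumes agr: "agrees_dev k h" and "k < \<rho>" and p: "p \<in> set_pmf (profile_pmf n Ginfo \<sigma>_dev h)"
  shows "p i = dev_action (m+k)"
    and "l \<noteq> i \<Longrightarrow> \<not> influenced l (m+k) \<Longrightarrow> p l = coop_action G (m+k) l"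
    and "valid_profile (G (m+k)) p"
proof -
  note p_in = set_profile_pmf(1)[OF p] and p_beyond = set_profile_pmf(2)[OF p]
  show p_i: "p i = dev_action (m+k)"
    using p_in i_lt dev_strategy_agrees_dev[OF agr] \<open>k < \<rho>\<close> by fastforce
  show "p l = coop_action G (m+k) l" if "l \<noteq> i" "\<not> influenced l (m+k)" for l
  proof (cases "l < n")
    case True
    then have "p l \<in> set_pmf (\<sigma> l (obs Ginfo l (coop_hist (m+k))))"
      using p_in that obs_uninfluenced[OF agr that] by auto
    then show ?thesis using \<sigma>_coop_hist[OF True] by simp
  qed (use p_beyond coop_action_beyond in simp)
  have "valid_ract (G (m+k)) l (p l)" for l
  proof -
    consider "l = i" | "l \<noteq> i" "l < n" | "n \<le> l" by linarith
    then show ?thesis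
    proof cases
      case 2
      then have "valid_strategy Gs Ginfo l (\<sigma> l)" using valid_\<sigma> unfolding valid_protocol_def by blast
      moreover have "valid_hist Gs h" "fst h = G" "length (snd h) = m + k"
        using agr by (simp_all add: agrees_dev_def)
      ultimately have "set_pmf (\<sigma> l (obs Ginfo l h)) \<subseteq> {a. valid_ract (G (m+k)) l a}"
        unfolding valid_strategy_def by metis
      then show ?thesis using p_in[rule_format, of l] 2 by auto
    next
      case 3
      then show ?thesis using p_beyond bound_G[of l _ "m+k"] by (auto simp: valid_ract_def)
    qed (use p_i valid_dev_action in simp)
  qed
  then show "valid_profile (G (m+k)) p" by (simp add: valid_profile_def)
qed

lemma agrees_dev_extend:
  assumes agr: "agrees_dev k h" and "k < \<rho>" and p: "p \<in> set_pmf (profile_pmf n Ginfo \<sigma>_dev h)"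
  shows "agrees_dev (Suc k) (extend h p)"
proof -
  have h: "valid_hist Gs h" "fst h = G" "length (snd h) = m + k"
    using agr by (simp_all add: agrees_dev_def)
  have "(p l x = dev_profile (m+k) l x)" if "l = i \<or> \<not> influenced l (m+k)" for l x
    using that profile_pmf_\<sigma>_dev(1)[OF agr \<open>k < \<rho>\<close> p] profile_pmf_\<sigma>_dev(2)[OF agr \<open>k < \<rho>\<close> p, of l]
    by (cases "l = i") (simp_all add: dev_profile_other)
  moreover have "valid_hist Gs (extend h p)"
    using h profile_pmf_\<sigma>_dev(3)[OF agr \<open>k < \<rho>\<close> p]
    unfolding valid_hist_def extend_def by (auto simp: nth_append less_Suc_eq)
  ultimately show ?thesis
    using agr h unfolding agrees_dev_def extend_def by (auto simp: nth_append less_Suc_eq)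
qed

lemma agrees_dev_run:
  "k \<le> \<rho> \<Longrightarrow> h \<in> set_pmf (run n Ginfo \<sigma>_dev k (coop_hist m)) \<Longrightarrow> agrees_dev k h"
proof (induction k arbitrary: h)
  case (Suc k)
  from Suc.prems(2) obtain h' p where h': "h' \<in> set_pmf (run n Ginfo \<sigma>_dev k (coop_hist m))"
    and p: "p \<in> set_pmf (profile_pmf n Ginfo \<sigma>_dev h')" and "h = extend h' p"
    by (simp only: run.simps set_bind_pmf set_map_pmf) blast
  have "agrees_dev k h'" using Suc.IH[OF _ h'] Suc.prems(1) by simp
  then show ?case using agrees_dev_extend[OF _ _ p] Suc.prems(1) \<open>h = extend h' p\<close> by simp
qed (simp add: agrees_dev_0)

lemma round_util_agrees_dev:
  assumes "k < \<rho>" and agr: "agrees_dev (Suc k) h"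
  shows "last_round_util \<beta> \<alpha> \<pi> i h
       = round_util \<beta> \<alpha> \<pi> i G (m+k) (coop_action G (m+k)) + (if k = 0 then 1 else 0)"
proof -
  let ?r = "m + k"
  let ?N = "{x. (i,x) \<in> G ?r}"
  have h: "fst h = G" "length (snd h) = Suc ?r" using agr by (simp_all add: agrees_dev_def)
  define p where "p = last (snd h)"
  have "snd h \<noteq> []" using h(2) by auto
  then have p_nth: "p = snd h ! ?r" unfolding p_def using h(2) by (simp add: last_conv_nth)
  have "\<forall>r<Suc ?r. \<forall>l x. (l = i \<or> \<not> influenced l r) \<longrightarrow> (snd h ! r) l x = dev_profile r l x"
    using agr unfolding agrees_dev_def add_Suc_right by (elim conjE)
  then have ent: "p l x = dev_profile ?r l x" if "l = i \<or> \<not> influenced l ?r" for l x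
    using that lessI unfolding p_nth by blast
  have "(if sends (p x i) then \<beta> else 0) - (if sends (p i x) then 1 else 0)
      - (if sends (p x i) then \<alpha> else 0) - (if p x i = Some Punish then \<pi> else 0)
    = ((if sends (coop_action G ?r x i) then \<beta> else 0) - (if sends (coop_action G ?r i x) then 1 else 0)
      - (if sends (coop_action G ?r x i) then \<alpha> else 0) - (if coop_action G ?r x i = Some Punish then \<pi> else 0))
      + (if ?r = m \<and> x = j then 1 else 0)" if "x \<in> ?N" for x
  proof -
    have "x \<noteq> i" using that irrefl_G by auto
    then have "p x i = coop_action G ?r x i"
      using ent[of x i] neighbour_uninfluenced[of ?r x] that \<open>k < \<rho>\<close> by (simp add: dev_profile_other)
    moreover have "p i x = (if ?r = m \<and> x = j then Some Defect else Some Cooperate)"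
      using ent[of i x] that by (auto simp: dev_action_def coop_action_def)
    ultimately show ?thesis using that by (auto simp: sends_def coop_action_def)
  qed
  then have "round_util \<beta> \<alpha> \<pi> i G ?r p
      = round_util \<beta> \<alpha> \<pi> i G ?r (coop_action G ?r) + (\<Sum>x\<in>?N. if ?r = m \<and> x = j then 1 else 0)"
    unfolding round_util_def by (simp add: sum.distrib)
  also have "(\<Sum>x\<in>?N. if ?r = m \<and> x = j then (1::real) else 0) = (if k = 0 then 1 else 0)"
  proof (cases "k = 0")
    case True
    have "finite ?N" using bound_G by (auto intro: finite_subset[of _ "{..<n}"])
    then show ?thesis using edge True by (simp add: sum.delta)
  qed simp
  finally show ?thesis using h by (simp add: p_def)
qed

lemma expected_util_\<sigma>:
  "measure_pmf.expectation (run n Ginfo \<sigma> (Suc k) (coop_hist m)) (last_round_util \<beta> \<alpha> \<pi> i)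
   = round_util \<beta> \<alpha> \<pi> i G (m+k) (coop_action G (m+k))"
  unfolding run_coop_hist by (simp add: coop_hist_def)

lemma expected_util_\<sigma>_dev:
  assumes "k < \<rho>"
  shows "measure_pmf.expectation (run n Ginfo \<sigma>_dev (Suc k) (coop_hist m)) (last_round_util \<beta> \<alpha> \<pi> i)
   = measure_pmf.expectation (run n Ginfo \<sigma> (Suc k) (coop_hist m)) (last_round_util \<beta> \<alpha> \<pi> i)
     + (if k = 0 then 1 else 0)"
  unfolding expected_util_\<sigma>
  by (rule expectation_pmf_const) (use assms agrees_dev_run round_util_agrees_dev in auto)

lemma abs_expected_util_le:
  "\<bar>measure_pmf.expectation (run n Ginfo \<tau> (Suc k) (coop_hist m)) (last_round_util \<beta> \<alpha> \<pi> i)\<bar>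
    \<le> real n * (\<bar>\<beta>\<bar> + 1 + \<bar>\<alpha>\<bar> + \<bar>\<pi>\<bar>)"
proof (rule abs_expectation_pmf_le, rule ballI)
  fix h assume "h \<in> set_pmf (run n Ginfo \<tau> (Suc k) (coop_hist m))"
  then have "fst h = G" using set_run_pmf by fastforce
  then show "\<bar>last_round_util \<beta> \<alpha> \<pi> i h\<bar> \<le> real n * (\<bar>\<beta>\<bar> + 1 + \<bar>\<alpha>\<bar> + \<bar>\<pi>\<bar>)"
    using abs_round_util_le[OF wf_G] by simp
qed

lemma util_\<sigma>_dev_gain:
  assumes "0 < \<delta>" "\<delta> < 1" "0 < \<rho>"
    and small: "2 * (real n * (\<bar>\<beta>\<bar> + 1 + \<bar>\<alpha>\<bar> + \<bar>\<pi>\<bar>)) * (\<delta> ^ \<rho> / (1 - \<delta>)) < 1"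
  shows "util n Ginfo \<beta> \<alpha> \<pi> \<delta> \<sigma> i (coop_hist m) < util n Ginfo \<beta> \<alpha> \<pi> \<delta> \<sigma>_dev i (coop_hist m)"
proof -
  have "1 - 2 * (real n * (\<bar>\<beta>\<bar> + 1 + \<bar>\<alpha>\<bar> + \<bar>\<pi>\<bar>)) * (\<delta> ^ \<rho> / (1 - \<delta>))
      \<le> util n Ginfo \<beta> \<alpha> \<pi> \<delta> \<sigma>_dev i (coop_hist m) - util n Ginfo \<beta> \<alpha> \<pi> \<delta> \<sigma> i (coop_hist m)"
    unfolding util_def
    by (rule discounted_gain_ge[OF assms(1-3) abs_expected_util_le abs_expected_util_le expected_util_\<sigma>_dev])
  with small show ?thesis by simp
qed

lemma pmf_run_coop_hist_ge:
  "(\<Prod>r<t. \<Prod>l<n. pmf (\<tau> l (obs Ginfo l (coop_hist r))) (coop_action G r l))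
   \<le> pmf (run n Ginfo \<tau> t (G, [])) (coop_hist t)"
proof (induction t)
  case (Suc t)
  let ?Q = "\<lambda>r. \<Prod>l<n. pmf (\<tau> l (obs Ginfo l (coop_hist r))) (coop_action G r l)"
  have "(\<Prod>r<Suc t. ?Q r) = (\<Prod>r<t. ?Q r) * ?Q t" by simp
  also have "\<dots> \<le> pmf (run n Ginfo \<tau> t (G, [])) (coop_hist t)
      * pmf (profile_pmf n Ginfo \<tau> (coop_hist t)) (coop_action G t)"
    by (intro mult_mono Suc.IH pmf_profile_pmf_ge prod_nonneg) (simp_all add: coop_action_beyond)
  also have "\<dots> \<le> pmf (run n Ginfo \<tau> t (G, [])) (coop_hist t)
      * pmf (map_pmf (extend (coop_hist t)) (profile_pmf n Ginfo \<tau> (coop_hist t))) (coop_hist (Suc t))"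
    unfolding coop_hist_Suc by (intro mult_left_mono pmf_map_pmf_ge) simp
  also have "\<dots> \<le> pmf (run n Ginfo \<tau> (Suc t) (G, [])) (coop_hist (Suc t))"
    by (simp only: run.simps) (rule pmf_bind_pmf_ge)
  finally show ?case .
qed simp

lemma pmf_run_coop_hist_tendsto:
  assumes conv: "\<forall>l<n. \<forall>h. valid_hist Gs h \<longrightarrow>
      (\<forall>a. (\<lambda>c. pmf (\<tau>c c l (obs Ginfo l h)) a) \<longlonglongrightarrow> pmf (\<sigma> l (obs Ginfo l h)) a)"
  shows "(\<lambda>c. pmf (run n Ginfo (\<tau>c c) t (G, [])) (coop_hist t)) \<longlonglongrightarrow> 1"
proof (rule tendsto_sandwich[of "\<lambda>c. \<Prod>r<t. \<Prod>l<n. pmf (\<tau>c c l (obs Ginfo l (coop_hist r))) (coop_action G r l)"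
      _ _ "\<lambda>_. 1"])
  have "(\<lambda>c. \<Prod>r<t. \<Prod>l<n. pmf (\<tau>c c l (obs Ginfo l (coop_hist r))) (coop_action G r l))
      \<longlonglongrightarrow> (\<Prod>r<t. \<Prod>l<n. 1)"
  proof (intro tendsto_prod)
    fix r l assume "l \<in> {..<n}"
    then have "(\<lambda>c. pmf (\<tau>c c l (obs Ginfo l (coop_hist r))) (coop_action G r l))
        \<longlonglongrightarrow> pmf (\<sigma> l (obs Ginfo l (coop_hist r))) (coop_action G r l)"
      using conv coop_hist_valid by blast
    then show "(\<lambda>c. pmf (\<tau>c c l (obs Ginfo l (coop_hist r))) (coop_action G r l)) \<longlonglongrightarrow> 1"
      using \<sigma>_coop_hist \<open>l \<in> {..<n}\<close> by simp
  qed
  then show "(\<lambda>c. \<Prod>r<t. \<Prod>l<n. pmf (\<tau>c c l (obs Ginfo l (coop_hist r))) (coop_action G r l)) \<longlonglongrightarrow> 1"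
    by simp
qed (simp_all add: pmf_run_coop_hist_ge pmf_le_1)

abbreviation coop_infoset :: "history set" where
  "coop_infoset \<equiv> infoset Gs Ginfo i (coop_hist m)"

lemma coop_infoset_in_infosets_G: "coop_infoset \<in> infosets_G Gs Ginfo i G"
  unfolding infosets_G_def using coop_hist_valid[of m] by (intro CollectI exI[of _ "coop_hist m"]) simp

lemma coop_hist_in_coop_infoset: "coop_hist m \<in> coop_infoset"
  unfolding infoset_def using coop_hist_valid by simp

lemma belief_coop_infoset:
  assumes "consistent n Gs Ginfo \<sigma> \<mu>" and h: "h \<in> coop_infoset"
  shows "\<mu> G i coop_infoset h = (if h = coop_hist m then 1 else 0)"
proof -
  obtain \<tau>c :: "nat \<Rightarrow> protocol" where
    conv: "\<forall>l<n. \<forall>h. valid_hist Gs h \<longrightarrow>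
      (\<forall>a. (\<lambda>c. pmf (\<tau>c c l (obs Ginfo l h)) a) \<longlonglongrightarrow> pmf (\<sigma> l (obs Ginfo l h)) a)" and
    beliefs: "(\<lambda>c. Pr n Ginfo (\<tau>c c) G h / infsum (Pr n Ginfo (\<tau>c c) G) coop_infoset)
      \<longlonglongrightarrow> \<mu> G i coop_infoset h"
    using assms G_in i_lt coop_infoset_in_infosets_G unfolding consistent_def by blast
  define M where "M c = run n Ginfo (\<tau>c c) m (G, [])" for c
  have Pr_eq: "Pr n Ginfo (\<tau>c c) G h' = pmf (M c) h'" if "h' \<in> coop_infoset" for c h'
    using length_eq_if_obs_eq[of Ginfo i h' "coop_hist m"] that
    unfolding Pr_def M_def infoset_def by simp
  have "infsum (Pr n Ginfo (\<tau>c c) G) coop_infoset = measure_pmf.prob (M c) coop_infoset" for c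
    using infsum_cong[of coop_infoset "Pr n Ginfo (\<tau>c c) G" "pmf (M c)"] Pr_eq
    by (simp add: infsum_pmf_eq_prob)
  then have "(\<lambda>c. Pr n Ginfo (\<tau>c c) G h / infsum (Pr n Ginfo (\<tau>c c) G) coop_infoset)
      \<longlonglongrightarrow> (if h = coop_hist m then 1 else 0)"
    using conditional_pmf_tendsto[OF pmf_run_coop_hist_tendsto[OF conv] coop_hist_in_coop_infoset, of h]
    by (simp add: Pr_eq[OF h] M_def)
  with beliefs show ?thesis by (rule LIMSEQ_unique)
qed

lemma util_I_coop_infoset:
  assumes "consistent n Gs Ginfo \<sigma> \<mu>"
  shows "util_I n Ginfo \<beta> \<alpha> \<pi> \<delta> \<mu> \<tau> G i coop_infoset = util n Ginfo \<beta> \<alpha> \<pi> \<delta> \<tau> i (coop_hist m)"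
proof -
  have "util_I n Ginfo \<beta> \<alpha> \<pi> \<delta> \<mu> \<tau> G i coop_infoset
      = infsum (\<lambda>h. \<mu> G i coop_infoset h * util n Ginfo \<beta> \<alpha> \<pi> \<delta> \<tau> i h) {coop_hist m}"
    unfolding util_I_def
    by (rule infsum_cong_neutral) (use coop_hist_in_coop_infoset belief_coop_infoset[OF assms] in auto)
  then show ?thesis
    using belief_coop_infoset[OF assms coop_hist_in_coop_infoset] by simp
qed

end

theorem theorem1:
  fixes n :: nat and Gs :: "egraph set"
    and Ginfo :: "egraph \<Rightarrow> nat \<Rightarrow> nat \<Rightarrow> graph set"
    and \<beta> \<alpha> \<pi> \<delta> :: real
  assumes "\<alpha> \<ge> 0" and "0 < \<delta>" and "\<delta> < 1"
    and "wf_egraphs n Gs"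
    and "info_ok n Gs Ginfo"
    and "\<not> timely_punishments n Gs"
  shows "\<not> (\<exists>\<sigma>. enforces_accountability n Gs Ginfo \<beta> \<alpha> \<pi> \<delta> \<sigma>)"
proof
  assume "\<exists>\<sigma>. enforces_accountability n Gs Ginfo \<beta> \<alpha> \<pi> \<delta> \<sigma>"
  then obtain \<sigma> \<mu> where coop: "\<forall>h. valid_hist Gs h \<and> all_coop h \<longrightarrow>
        (\<forall>l<n. \<sigma> l (obs Ginfo l h) = return_pmf (coop_action (fst h) (length (snd h)) l))"
    and valid: "valid_protocol n Gs Ginfo \<sigma>" and cons: "consistent n Gs Ginfo \<sigma> \<mu>"
    and opt: "\<forall>G\<in>Gs. \<forall>i<n. \<forall>s. valid_strategy Gs Ginfo i s \<longrightarrow> (\<forall>I\<in>infosets_G Gs Ginfo i G.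
        util_I n Ginfo \<beta> \<alpha> \<pi> \<delta> \<mu> (\<sigma>(i := s)) G i I \<le> util_I n Ginfo \<beta> \<alpha> \<pi> \<delta> \<mu> \<sigma> G i I)"
    unfolding enforces_accountability_def OAPE_def by blast
  obtain \<rho> :: nat where "0 < \<rho>"
    and small: "2 * (real n * (\<bar>\<beta>\<bar> + 1 + \<bar>\<alpha>\<bar> + \<bar>\<pi>\<bar>)) / (1 - \<delta>) * \<delta> ^ \<rho> < 1"
    using discount_tail_small[OF assms(2,3)] by blast
  with assms(6) obtain G i j m where "G \<in> Gs" "i < n" "i_edge G i (j, m)"
    and "\<not> (\<exists>l m'. punishment_opportunity G i (j, m) (l, m') \<and> m' < m + \<rho>)"
    unfolding timely_punishments_def by blast
  then interpret unpunished_edge n Gs Ginfo \<sigma> G i j m \<rho>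
    using assms(4,5) valid coop by unfold_locales (simp_all add: i_edge_def)
  have "util_I n Ginfo \<beta> \<alpha> \<pi> \<delta> \<mu> \<sigma>_dev G i coop_infoset \<le> util_I n Ginfo \<beta> \<alpha> \<pi> \<delta> \<mu> \<sigma> G i coop_infoset"
    using opt G_in i_lt dev_strategy_valid coop_infoset_in_infosets_G by blast
  moreover have "util n Ginfo \<beta> \<alpha> \<pi> \<delta> \<sigma> i (coop_hist m) < util n Ginfo \<beta> \<alpha> \<pi> \<delta> \<sigma>_dev i (coop_hist m)"
    using util_\<sigma>_dev_gain[OF assms(2,3) \<open>0 < \<rho>\<close>] small by (simp add: field_simps)
  ultimately show False by (simp add: util_I_coop_infoset[OF cons])
qed

end
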